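(* Suppose $l$ is $(M,m)$-(restricted smooth, restricted strongly concave) on $\Omega_{2k}$. Then for all subsets $\mathsf{S},\mathsf{T}\subseteq[n]$ of size at most $k$, $$\frac{M}{m}f_{\mathsf{S}}(\mathsf{T})\ \ge\ \sum_{j\in\mathsf{T}}f_{\mathsf{S}}(j)\ \ge\ \frac{m}{M}f_{\mathsf{S}}(\mathsf{T}).$$
   Context: $\Omega_r=\{(\mathbf{x},\mathbf{y})\in\mathbb{R}^n\times\mathbb{R}^n:\|\mathbf{x}\|_0\le r,\|\mathbf{y}\|_0\le r,\|\mathbf{x}-\mathbf{y}\|_0\le r\}$. A differentiable $l:\mathbb{R}^n\to\mathbb{R}$ is $(M,m)$-(restricted smooth, restricted strongly concave) on $\Omega_r$ if for all $(\mathbf{x},\mathbf{y})\in\Omega_r$: $-\tfrac{m}{2}\|\mathbf{y}-\mathbf{x}\|_2^2\ge l(\mathbf{y})-l(\mathbf{x})-\langle\nabla l(\mathbf{x}),\mathbf{y}-\mathbf{x}\rangle\ge -\tfrac{M}{2}\|\mathbf{y}-\mathbf{x}\|_2^2$, with $m,M>0$. For $\mathsf{S}\subseteq[n]$, $\boldsymbol\beta^{(\mathsf{S})}$ is a maximizer of $l$ over vectors supported in $\mathsf{S}$, $f(\mathsf{S})=l(\boldsymbol\beta^{(\mathsf{S})})-l(\mathbf{0})$, $f_{\mathsf{S}}(\mathsf{T})=f(\mathsf{S}\cup\mathsf{T})-f(\mathsf{S})$ and $f_{\mathsf{S}}(j)=f_{\mathsf{S}}(\{j\})$. *)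

theory Defs
  imports "HOL-Analysis.Analysis"
begin

text \<open>Vectors in R^n are modelled as real ^ 'n; the index set [n] is UNIV :: 'n set.\<close>

definition supp :: "real ^ 'n \<Rightarrow> 'n set" where
  "supp x = {i. x $ i \<noteq> 0}"

definition l0norm :: "real ^ 'n \<Rightarrow> nat" where
  "l0norm x = card (supp x)"

definition Omega :: "nat \<Rightarrow> ((real ^ 'n) \<times> (real ^ 'n)) set" where
  "Omega r = {(x, y). l0norm x \<le> r \<and> l0norm y \<le> r \<and> l0norm (x - y) \<le> r}"

text \<open>Inner product of the gradient of l at x with v is the Frechet derivative of l at x applied to v.\<close>
definition RSM_RSC :: "real \<Rightarrow> real \<Rightarrow> (real ^ 'n \<Rightarrow> real) \<Rightarrow> nat \<Rightarrow> bool" where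
  "RSM_RSC M m l r \<longleftrightarrow> m > 0 \<and> M > 0 \<and> (\<forall>x. l differentiable (at x)) \<and>
     (\<forall>(x, y) \<in> Omega r.
        - (m / 2) * (norm (y - x))\<^sup>2 \<ge> l y - l x - frechet_derivative l (at x) (y - x) \<and>
        l y - l x - frechet_derivative l (at x) (y - x) \<ge> - (M / 2) * (norm (y - x))\<^sup>2)"

definition beta :: "(real ^ 'n \<Rightarrow> real) \<Rightarrow> 'n set \<Rightarrow> real ^ 'n" where
  "beta l S = (SOME b. supp b \<subseteq> S \<and> (\<forall>z. supp z \<subseteq> S \<longrightarrow> l z \<le> l b))"

definition fset :: "(real ^ 'n \<Rightarrow> real) \<Rightarrow> 'n set \<Rightarrow> real" where
  "fset l S = l (beta l S) - l 0"

definition fmarg :: "(real ^ 'n \<Rightarrow> real) \<Rightarrow> 'n set \<Rightarrow> 'n set \<Rightarrow> real" where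
  "fmarg l S T = fset l (S \<union> T) - fset l S"

end

theory Submission imports Defs begin

text \<open>Let \<open>G(T)\<close> be the squared norm of the gradient of \<open>l\<close> at \<open>\<beta>(S)\<close>
  restricted to the coordinates \<open>T - S\<close>; by optimality of \<open>\<beta>(S)\<close> the gradient vanishes on
  \<open>S\<close>. A gradient step of length \<open>1/M\<close> (restricted smoothness) shows
  \<open>f\<^sub>S(T) \<ge> G(T)/(2M)\<close>, and completing the square in the restricted strong concavity bound
  shows \<open>f\<^sub>S(T) \<le> G(T)/(2m)\<close>. Since \<open>G\<close> is additive over the coordinates, the same sandwich
  holds for \<open>\<Sum>\<^sub>j\<^sub>\<in>\<^sub>T f\<^sub>S(j)\<close>, and comparing the two sandwiches gives the ratios \<open>M/m\<close> and \<open>m/M\<close>.\<close>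

lemma supp_diff: "supp (x - y :: real ^ 'n) \<subseteq> supp x \<union> supp y"
  unfolding supp_def by auto

lemma supp_add: "supp (x + y :: real ^ 'n) \<subseteq> supp x \<union> supp y"
  unfolding supp_def by auto

lemma supp_scaleR: "supp (c *\<^sub>R x :: real ^ 'n) \<subseteq> supp x"
  unfolding supp_def by auto

lemma l0norm_le_card: "supp x \<subseteq> L \<Longrightarrow> l0norm x \<le> card L"
  unfolding l0norm_def by (simp add: card_mono)

lemma Omega_memI:
  assumes "supp x \<subseteq> L" "supp y \<subseteq> L" "card L \<le> r"
  shows "(x, y) \<in> Omega r"
proof -
  have "supp (x - y) \<subseteq> L" using assms(1,2) supp_diff[of x y] by blast
  then show ?thesis
    using assms l0norm_le_card[of x L] l0norm_le_card[of y L] l0norm_le_card[of "x - y" L]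
    unfolding Omega_def by auto
qed

definition coord_restrict :: "'n set \<Rightarrow> real ^ 'n \<Rightarrow> real ^ 'n" where
  "coord_restrict I v = (\<chi> i. if i \<in> I then v $ i else 0)"

lemma supp_coord_restrict: "supp (coord_restrict I v) \<subseteq> I"
  unfolding supp_def coord_restrict_def by auto

lemma inner_coord_restrict:
  assumes "supp d \<subseteq> I"
  shows "inner v d = inner (coord_restrict I v) d"
proof -
  have "d $ i = 0" if "i \<notin> I" for i using assms that unfolding supp_def by blast
  then show ?thesis unfolding inner_vec_def coord_restrict_def by (intro sum.cong) auto
qed

lemma power2_norm_coord_restrict:
  "(norm (coord_restrict I v))\<^sup>2 = (\<Sum>i\<in>I. (v $ i)\<^sup>2)"
proof -
  have "inner (coord_restrict I v) (coord_restrict I v) = (norm (coord_restrict I v))\<^sup>2"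
    by (rule dot_square_norm)
  then have "(norm (coord_restrict I v))\<^sup>2 = (\<Sum>i\<in>UNIV. (coord_restrict I v $ i)\<^sup>2)"
    by (simp add: inner_vec_def power2_eq_square)
  also have "\<dots> = (\<Sum>i\<in>UNIV. if i \<in> I then (v $ i)\<^sup>2 else 0)"
    by (intro sum.cong) (auto simp: coord_restrict_def)
  also have "\<dots> = (\<Sum>i\<in>I. (v $ i)\<^sup>2)"
    by (simp add: sum.If_cases)
  finally show ?thesis .
qed

lemma inner_coord_restrict_self:
  "inner v (coord_restrict I v) = (norm (coord_restrict I v))\<^sup>2"
proof -
  have "inner v (coord_restrict I v) = inner (coord_restrict I v) (coord_restrict I v)"
    by (rule inner_coord_restrict[OF supp_coord_restrict])
  then show ?thesis by (simp add: dot_square_norm)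
qed

definition grad :: "(real ^ 'n \<Rightarrow> real) \<Rightarrow> real ^ 'n \<Rightarrow> real ^ 'n" where
  "grad l x = (\<chi> i. frechet_derivative l (at x) (axis i 1))"

lemma linear_eq_sum_axis:
  fixes f :: "real ^ 'n \<Rightarrow> real"
  assumes "linear f"
  shows "f x = (\<Sum>i\<in>UNIV. x $ i * f (axis i 1))"
proof -
  have "f x = f (\<Sum>i\<in>UNIV. x $ i *\<^sub>R axis i 1)"
    using basis_expansion[of x] by (simp add: scalar_mult_eq_scaleR)
  also have "\<dots> = (\<Sum>i\<in>UNIV. x $ i * f (axis i 1))"
    using assms by (simp add: linear_sum linear_scale)
  finally show ?thesis .
qed

lemma frechet_derivative_eq_inner_grad:
  assumes "l differentiable (at x)"
  shows "frechet_derivative l (at x) v = inner (grad l x) v"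
proof -
  have "linear (frechet_derivative l (at x))"
    using assms frechet_derivative_works has_derivative_linear by blast
  then show ?thesis
    unfolding grad_def inner_vec_def by (simp add: linear_eq_sum_axis[of _ v] mult.commute)
qed

lemma RSM_RSC_pos: "RSM_RSC M m l r \<Longrightarrow> 0 < m \<and> 0 < M"
  unfolding RSM_RSC_def by blast

lemma RSM_RSC_upper:
  assumes "RSM_RSC M m l r" "(x, y) \<in> Omega r"
  shows "l y \<le> l x + inner (grad l x) (y - x) - m / 2 * (norm (y - x))\<^sup>2"
  using assms frechet_derivative_eq_inner_grad[of l x "y - x"]
  unfolding RSM_RSC_def by fastforce

lemma RSM_RSC_lower:
  assumes "RSM_RSC M m l r" "(x, y) \<in> Omega r"
  shows "l x + inner (grad l x) (y - x) - M / 2 * (norm (y - x))\<^sup>2 \<le> l y"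
  using assms frechet_derivative_eq_inner_grad[of l x "y - x"]
  unfolding RSM_RSC_def by fastforce

lemma inner_minus_quadratic_le:
  fixes h d :: "'a :: real_inner"
  assumes "0 < m"
  shows "inner h d - m / 2 * (norm d)\<^sup>2 \<le> (norm h)\<^sup>2 / (2 * m)"
proof -
  have "m * inner h d = inner h (m *\<^sub>R d)" by simp
  also have "\<dots> = ((norm h)\<^sup>2 + (norm (m *\<^sub>R d))\<^sup>2 - (norm (h - m *\<^sub>R d))\<^sup>2) / 2"
    by (rule dot_norm_neg)
  also have "\<dots> \<le> ((norm h)\<^sup>2 + m\<^sup>2 * (norm d)\<^sup>2) / 2"
    using assms by (simp add: power_mult_distrib)
  finally show ?thesis using assms by (simp add: field_simps power2_eq_square)
qed

lemma RSM_RSC_gain_le: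
  assumes "RSM_RSC M m l r" "supp x \<subseteq> L" "supp y \<subseteq> L" "card L \<le> r"
  shows "l y \<le> l x + (norm (coord_restrict L (grad l x)))\<^sup>2 / (2 * m)"
proof -
  have "supp (y - x) \<subseteq> L" using assms(2,3) supp_diff[of y x] by blast
  then have "inner (grad l x) (y - x) = inner (coord_restrict L (grad l x)) (y - x)"
    by (rule inner_coord_restrict)
  moreover have "l y \<le> l x + inner (grad l x) (y - x) - m / 2 * (norm (y - x))\<^sup>2"
    using RSM_RSC_upper[OF assms(1) Omega_memI[OF assms(2-4)]] .
  ultimately show ?thesis
    using inner_minus_quadratic_le[of m "coord_restrict L (grad l x)" "y - x"]
      RSM_RSC_pos[OF assms(1)] by linarith
qed

lemma RSM_RSC_gradient_step:
  assumes "RSM_RSC M m l r" "supp x \<subseteq> L" "I \<subseteq> L" "card L \<le> r"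
  defines "w \<equiv> (1 / M) *\<^sub>R coord_restrict I (grad l x)"
  shows "supp (x + w) \<subseteq> L"
    and "l x + (norm (coord_restrict I (grad l x)))\<^sup>2 / (2 * M) \<le> l (x + w)"
proof -
  show xw: "supp (x + w) \<subseteq> L"
    using assms(2,3) supp_add[of x w] supp_scaleR supp_coord_restrict unfolding w_def by blast
  have M: "0 < M" using RSM_RSC_pos[OF assms(1)] by blast
  have "l x + inner (grad l x) w - M / 2 * (norm w)\<^sup>2 \<le> l (x + w)"
    using RSM_RSC_lower[OF assms(1) Omega_memI[OF assms(2) xw assms(4)]] by simp
  moreover have "inner (grad l x) w - M / 2 * (norm w)\<^sup>2
      = (norm (coord_restrict I (grad l x)))\<^sup>2 / (2 * M)"
    using M unfolding w_def
    by (simp add: inner_coord_restrict_self power2_eq_square field_simps)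
  ultimately show "l x + (norm (coord_restrict I (grad l x)))\<^sup>2 / (2 * M) \<le> l (x + w)"
    by linarith
qed

lemma closed_supp_subset: "closed {z :: real ^ 'n. supp z \<subseteq> L}"
proof -
  have "{z :: real ^ 'n. supp z \<subseteq> L} = (\<Inter>i\<in>-L. {z. z $ i = 0})"
    unfolding supp_def by auto
  then show ?thesis by (simp add: closed_INT closed_Collect_eq
        continuous_on_component)
qed

text \<open>Restricted strong concavity makes \<open>l\<close> coercive on the subspace of vectors supported
  in \<open>L\<close>, so the supremum is attained on a ball.\<close>
lemma RSM_RSC_maximizer_exists:
  assumes "RSM_RSC M m l r" "card L \<le> r"
  shows "\<exists>b. supp b \<subseteq> L \<and> (\<forall>z. supp z \<subseteq> L \<longrightarrow> l z \<le> l b)"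
proof -
  have m: "0 < m" using RSM_RSC_pos[OF assms(1)] by blast
  define g where "g = grad l 0"
  have up: "l z \<le> l 0 + norm g * norm z - m / 2 * (norm z)\<^sup>2" if "supp z \<subseteq> L" for z
    using RSM_RSC_upper[OF assms(1) Omega_memI[of 0 L z r]] that assms(2)
      norm_cauchy_schwarz[of g z] unfolding g_def supp_def by force
  define C where "C = {z. supp z \<subseteq> L} \<inter> cball 0 (2 * norm g / m)"
  have "compact C" unfolding C_def by (intro closed_Int_compact closed_supp_subset compact_cball)
  moreover have "0 \<in> C" using m unfolding C_def supp_def by simp
  moreover have "continuous_on C l"
    using assms(1) unfolding RSM_RSC_def
    by (meson continuous_at_imp_continuous_on differentiable_imp_continuous_within)
  ultimately obtain b where b: "b \<in> C" "\<And>y. y \<in> C \<Longrightarrow> l y \<le> l b"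
    using continuous_attains_sup by (metis empty_iff)
  have "l z \<le> l b" if z: "supp z \<subseteq> L" for z
  proof (cases "norm z \<le> 2 * norm g / m")
    case True
    then show ?thesis using z b(2) unfolding C_def by simp
  next
    case False
    then have "norm g * norm z < m / 2 * norm z * norm z"
      using m by (intro mult_strict_right_mono) (auto simp: field_simps)
    then have "l z \<le> l 0" using up[OF z] by (simp add: power2_eq_square)
    also have "l 0 \<le> l b" using b(2) \<open>0 \<in> C\<close> by blast
    finally show ?thesis .
  qed
  then show ?thesis using b(1) unfolding C_def by blast
qed

lemma
  assumes "RSM_RSC M m l r" "card L \<le> r"
  shows supp_beta: "supp (beta l L) \<subseteq> L"
    and beta_maximal: "supp z \<subseteq> L \<Longrightarrow> l z \<le> l (beta l L)"
  using someI_ex[OF RSM_RSC_maximizer_exists[OF assms]] unfolding beta_def by blast+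

lemma grad_beta_vanishes:
  assumes "RSM_RSC M m l r" "card S \<le> r" "i \<in> S"
  shows "grad l (beta l S) $ i = 0"
proof -
  let ?b = "beta l S"
  have "{i} \<subseteq> S" using assms(3) by blast
  note step = RSM_RSC_gradient_step[OF assms(1) supp_beta[OF assms(1,2)] this assms(2)]
  have "l ?b + (grad l ?b $ i)\<^sup>2 / (2 * M) \<le> l ?b"
    using step(2) beta_maximal[OF assms(1,2) step(1)] by (simp add: power2_norm_coord_restrict)
  then show ?thesis using RSM_RSC_pos[OF assms(1)] by (simp add: field_simps)
qed

lemma fmarg_bounds:
  assumes "RSM_RSC M m l r" "card (S \<union> T) \<le> r"
  defines "G \<equiv> (\<Sum>i\<in>T - S. (grad l (beta l S) $ i)\<^sup>2)"
  shows "G / (2 * M) \<le> fmarg l S T \<and> fmarg l S T \<le> G / (2 * m)"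
proof -
  let ?b = "beta l S" and ?c = "beta l (S \<union> T)"
  have cS: "card S \<le> r" using assms(2) card_mono[of "S \<union> T" S] by simp
  have b: "supp ?b \<subseteq> S \<union> T" using supp_beta[OF assms(1) cS] by blast
  have c: "supp ?c \<subseteq> S \<union> T" by (rule supp_beta[OF assms(1,2)])
  have "coord_restrict (S \<union> T) (grad l ?b) = coord_restrict (T - S) (grad l ?b)"
    using grad_beta_vanishes[OF assms(1) cS] unfolding coord_restrict_def by (auto simp: vec_eq_iff)
  then have G: "G = (norm (coord_restrict (S \<union> T) (grad l ?b)))\<^sup>2"
    unfolding G_def by (simp add: power2_norm_coord_restrict)
  have "l ?c \<le> l ?b + G / (2 * m)"
    unfolding G by (rule RSM_RSC_gain_le[OF assms(1) b c assms(2)])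
  moreover have "l ?b + G / (2 * M) \<le> l ?c"
  proof -
    have "T - S \<subseteq> S \<union> T" by blast
    note step = RSM_RSC_gradient_step[OF assms(1) b this assms(2)]
    show ?thesis
      using step(2) beta_maximal[OF assms(1,2) step(1)]
      unfolding G_def power2_norm_coord_restrict by linarith
  qed
  ultimately show ?thesis unfolding fmarg_def fset_def by simp
qed

lemma sum_singleton_Diff:
  assumes "finite T"
  shows "(\<Sum>j\<in>T. \<Sum>i\<in>{j} - S. h i) = (\<Sum>i\<in>T - S. h i)"
proof -
  have "(\<Sum>j\<in>T. \<Sum>i\<in>{j} - S. h i) = (\<Sum>j\<in>T. if j \<in> S then 0 else h j)"
    by (intro sum.cong) (auto simp: insert_Diff_if)
  also have "\<dots> = (\<Sum>i\<in>T - S. h i)"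
    using assms by (simp add: sum.If_cases Diff_eq)
  finally show ?thesis .
qed

lemma ratio_sandwich:
  fixes G x y m M :: real
  assumes "0 < m" "0 < M"
    and x: "G / (2 * M) \<le> x \<and> x \<le> G / (2 * m)"
    and y: "G / (2 * M) \<le> y" "y \<le> G / (2 * m)"
  shows "y \<le> (M / m) * x \<and> (m / M) * x \<le> y"
proof -
  have "(M / m) * (G / (2 * M)) \<le> (M / m) * x" "(m / M) * x \<le> (m / M) * (G / (2 * m))"
    using assms(1,2) x by (intro mult_left_mono; simp)+
  moreover have "(M / m) * (G / (2 * M)) = G / (2 * m)" "(m / M) * (G / (2 * m)) = G / (2 * M)"
    using assms(1,2) by (simp_all add: field_simps)
  ultimately show ?thesis using y by linarith
qed

theorem mainTheorem4:
  fixes l :: "real ^ 'n \<Rightarrow> real" and M m :: real and k :: nat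
    and S T :: "'n set"
  assumes "RSM_RSC M m l (2 * k)"
    and "card S \<le> k" and "card T \<le> k"
  shows "(M / m) * fmarg l S T \<ge> (\<Sum>j\<in>T. fmarg l S {j})
    \<and> (\<Sum>j\<in>T. fmarg l S {j}) \<ge> (m / M) * fmarg l S T"
proof -
  define G where "G U = (\<Sum>i\<in>U - S. (grad l (beta l S) $ i)\<^sup>2)" for U
  have cST: "card (S \<union> T) \<le> 2 * k" using card_Un_le[of S T] assms(2,3) by linarith
  have single: "G {j} / (2 * M) \<le> fmarg l S {j} \<and> fmarg l S {j} \<le> G {j} / (2 * m)"
    if "j \<in> T" for j
  proof -
    have "card (S \<union> {j}) \<le> 2 * k" using that cST card_mono[of "S \<union> T" "S \<union> {j}"] by auto
    then show ?thesis unfolding G_def by (rule fmarg_bounds[OF assms(1)])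
  qed
  have sumG: "(\<Sum>j\<in>T. G {j}) = G T" unfolding G_def by (simp add: sum_singleton_Diff)
  have "(\<Sum>j\<in>T. G {j} / (2 * M)) \<le> (\<Sum>j\<in>T. fmarg l S {j})"
    "(\<Sum>j\<in>T. fmarg l S {j}) \<le> (\<Sum>j\<in>T. G {j} / (2 * m))"
    using single by (auto intro: sum_mono)
  then show ?thesis
    using ratio_sandwich[OF _ _ fmarg_bounds[OF assms(1) cST, folded G_def]] RSM_RSC_pos[OF assms(1)]
    by (simp add: sumG flip: sum_divide_distrib)
qed

end
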